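(* Let $h_1,h_2,\dots$ be real-valued i.i.d. random variables, and for $N\in\mathbb N$ set $\delta_N=\mathbb E(h_1\mathbf 1_{\{|h_1|\le N\}})$ and $\sigma_N=\frac1N\mathbb E(h_1^2\mathbf 1_{\{|h_1|\le N\}})$. For every $\eta>0$ there exists $N_\eta\in\mathbb N$ such that $\delta_N^2\le\eta N(1+\sigma_N)$ for all $N\ge N_\eta$. *)

theory Defs
  imports "HOL-Probability.Probability"
begin

end

theory Submission
  imports Defs
begin

(* Only the law of h 1 enters.
   Choose K with P(|h 1| > K) < \<eta>/2, possible because the tails of a real random variable
   vanish. For Y = h 1 * 1{|h 1| \<le> N}, the pointwise bound |Y| \<le> K + |Y| 1{|Y| > K} and
   Cauchy-Schwarz give \<delta>^2 \<le> 2 K^2 + 2 P(|Y| > K) E(Y^2) \<le> 2 K^2 + \<eta> N \<sigma>,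
   and 2 K^2 \<le> \<eta> N as soon as N \<ge> 2 K^2 / \<eta>. *)

lemma indicator_power2 [simp]: "(indicator A x :: 'b::semiring_1) ^ 2 = indicator A x"
  by (simp add: indicator_def)

lemma Cauchy_Schwarz_integral:
  fixes f g :: "'a \<Rightarrow> real"
  assumes [measurable]: "f \<in> borel_measurable M" "g \<in> borel_measurable M"
    and f2: "integrable M (\<lambda>x. (f x)\<^sup>2)" and g2: "integrable M (\<lambda>x. (g x)\<^sup>2)"
  shows "(\<integral>x. \<bar>f x * g x\<bar> \<partial>M)\<^sup>2 \<le> (\<integral>x. (f x)\<^sup>2 \<partial>M) * (\<integral>x. (g x)\<^sup>2 \<partial>M)"
proof -
  have nn_integral_power2: "(\<integral>\<^sup>+x. ennreal \<bar>u x\<bar> ^ 2 \<partial>M) = ennreal (\<integral>x. (u x)\<^sup>2 \<partial>M)"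
    if "integrable M (\<lambda>x. (u x)\<^sup>2)" for u :: "'a \<Rightarrow> real"
    using that by (simp add: ennreal_power nn_integral_eq_integral)
  have "(\<integral>\<^sup>+x. ennreal \<bar>f x * g x\<bar> \<partial>M)\<^sup>2
      \<le> (\<integral>\<^sup>+x. ennreal \<bar>f x\<bar> ^ 2 \<partial>M) * (\<integral>\<^sup>+x. ennreal \<bar>g x\<bar> ^ 2 \<partial>M)"
    using Cauchy_Schwarz_nn_integral[of "\<lambda>x. ennreal \<bar>f x\<bar>" M "\<lambda>x. ennreal \<bar>g x\<bar>"]
    by (simp add: abs_mult ennreal_mult)
  also have "\<dots> = ennreal ((\<integral>x. (f x)\<^sup>2 \<partial>M) * (\<integral>x. (g x)\<^sup>2 \<partial>M))"
    using f2 g2 by (simp add: nn_integral_power2 ennreal_mult)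
  finally have CS: "(\<integral>\<^sup>+x. ennreal \<bar>f x * g x\<bar> \<partial>M)\<^sup>2
      \<le> ennreal ((\<integral>x. (f x)\<^sup>2 \<partial>M) * (\<integral>x. (g x)\<^sup>2 \<partial>M))" .
  also have "\<dots> < top"
    by simp
  finally have "(\<integral>\<^sup>+x. ennreal \<bar>f x * g x\<bar> \<partial>M) < top"
    by (simp add: power_less_top_ennreal)
  then have "(\<integral>\<^sup>+x. ennreal \<bar>f x * g x\<bar> \<partial>M) = ennreal (\<integral>x. \<bar>f x * g x\<bar> \<partial>M)"
    by (intro nn_integral_eq_integral integrableI_nonneg) auto
  with CS show ?thesis
    by (simp add: ennreal_power)
qed

lemma (in finite_measure) measure_abs_gt_tendsto_0:
  fixes X :: "'a \<Rightarrow> real"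
  assumes [measurable]: "X \<in> borel_measurable M"
  shows "(\<lambda>n. measure M {x \<in> space M. real n < \<bar>X x\<bar>}) \<longlonglongrightarrow> 0"
proof -
  define B where "B n = {x \<in> space M. real n < \<bar>X x\<bar>}" for n
  have "(\<lambda>n. measure M (B n)) \<longlonglongrightarrow> measure M (\<Inter>n. B n)"
    by (rule finite_Lim_measure_decseq) (auto simp: B_def decseq_def)
  moreover have "(\<Inter>n. B n) = {}"
    by (auto simp: B_def) (metis reals_Archimedean2 less_asym)
  ultimately show ?thesis
    by (simp add: B_def)
qed

lemma (in prob_space) expectation_power2_le_tail_bound:
  fixes Y :: "'a \<Rightarrow> real" and K :: real
  assumes [measurable]: "Y \<in> borel_measurable M"
    and Y2: "integrable M (\<lambda>x. (Y x)\<^sup>2)" and "0 \<le> K"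
  shows "(expectation Y)\<^sup>2 \<le> 2 * K\<^sup>2 + 2 * prob {x \<in> space M. K < \<bar>Y x\<bar>} * expectation (\<lambda>x. (Y x)\<^sup>2)"
proof -
  define B where "B = {x \<in> space M. K < \<bar>Y x\<bar>}"
  have B[measurable]: "B \<in> sets M"
    unfolding B_def by measurable
  have "integrable M Y"
    using square_integrable_imp_integrable[OF _ Y2] by simp
  then have intYB: "integrable M (\<lambda>x. Y x * indicator B x)"
    by (rule integrable_real_mult_indicator[OF B])
  define c where "c = expectation (\<lambda>x. \<bar>Y x * indicator B x\<bar>)"
  have "\<bar>expectation Y\<bar> \<le> expectation (\<lambda>x. \<bar>Y x\<bar>)"
    by (rule integral_abs_bound)
  also have "\<dots> \<le> expectation (\<lambda>x. K + \<bar>Y x * indicator B x\<bar>)"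
    using \<open>0 \<le> K\<close> \<open>integrable M Y\<close> intYB
    by (intro integral_mono) (auto simp: B_def indicator_def)
  also have "\<dots> = K + c"
    unfolding c_def using intYB by (simp add: prob_space)
  finally have "\<bar>expectation Y\<bar> \<le> K + c" .
  then have "(expectation Y)\<^sup>2 \<le> (K + c)\<^sup>2"
    by (metis abs_ge_zero power2_abs power_mono)
  also have "\<dots> \<le> 2 * K\<^sup>2 + 2 * c\<^sup>2"
    using sum_squares_bound[of K c] by (simp add: power2_eq_square algebra_simps)
  also have "c\<^sup>2 \<le> expectation (\<lambda>x. (Y x)\<^sup>2) * expectation (\<lambda>x. (indicator B x)\<^sup>2)"
    unfolding c_def using Y2 by (intro Cauchy_Schwarz_integral) (auto simp: emeasure_eq_measure)
  also have "\<dots> = prob B * expectation (\<lambda>x. (Y x)\<^sup>2)"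
    by (simp add: B)
  finally show ?thesis
    unfolding B_def by simp
qed

lemma (in prob_space) truncated_expectation_power2_le:
  fixes X :: "'a \<Rightarrow> real" and K c :: real
  assumes [measurable]: "X \<in> borel_measurable M" and "0 \<le> K"
  shows "(expectation (\<lambda>x. X x * indicator {y. \<bar>X y\<bar> \<le> c} x))\<^sup>2
    \<le> 2 * K\<^sup>2 + 2 * prob {x \<in> space M. K < \<bar>X x\<bar>} * expectation (\<lambda>x. (X x)\<^sup>2 * indicator {y. \<bar>X y\<bar> \<le> c} x)"
proof -
  define Y where "Y = (\<lambda>x. X x * indicator {y. \<bar>X y\<bar> \<le> c} x)"
  have [measurable]: "Y \<in> borel_measurable M"
    unfolding Y_def by measurable
  have "(Y x)\<^sup>2 \<le> c\<^sup>2" for x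
  proof (cases "\<bar>X x\<bar> \<le> c")
    case True
    then have "\<bar>X x\<bar>\<^sup>2 \<le> c\<^sup>2"
      by (intro power_mono) simp_all
    then show ?thesis
      using True by (simp add: Y_def)
  qed (simp add: Y_def)
  then have Y2: "integrable M (\<lambda>x. (Y x)\<^sup>2)"
    by (intro integrable_const_bound[where B = "c\<^sup>2"]) simp_all
  have "prob {x \<in> space M. K < \<bar>Y x\<bar>} \<le> prob {x \<in> space M. K < \<bar>X x\<bar>}"
    by (intro finite_measure_mono) (auto simp: Y_def indicator_def)
  then have "2 * prob {x \<in> space M. K < \<bar>Y x\<bar>} * expectation (\<lambda>x. (Y x)\<^sup>2)
      \<le> 2 * prob {x \<in> space M. K < \<bar>X x\<bar>} * expectation (\<lambda>x. (Y x)\<^sup>2)"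
    by (intro mult_right_mono) simp_all
  moreover have "(expectation Y)\<^sup>2
      \<le> 2 * K\<^sup>2 + 2 * prob {x \<in> space M. K < \<bar>Y x\<bar>} * expectation (\<lambda>x. (Y x)\<^sup>2)"
    using Y2 \<open>0 \<le> K\<close> by (intro expectation_power2_le_tail_bound) simp_all
  ultimately have "(expectation Y)\<^sup>2
      \<le> 2 * K\<^sup>2 + 2 * prob {x \<in> space M. K < \<bar>X x\<bar>} * expectation (\<lambda>x. (Y x)\<^sup>2)"
    by linarith
  moreover have "(\<lambda>x. (Y x)\<^sup>2) = (\<lambda>x. (X x)\<^sup>2 * indicator {y. \<bar>X y\<bar> \<le> c} x)"
    by (simp add: Y_def fun_eq_iff power_mult_distrib)
  ultimately show ?thesis
    by (simp only: Y_def)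
qed

lemma (in prob_space) eventually_truncated_expectation_power2_le:
  fixes X :: "'a \<Rightarrow> real" and \<eta> :: real
  assumes X[measurable]: "X \<in> borel_measurable M" and "\<eta> > 0"
  shows "\<forall>\<^sub>F N in sequentially.
    (expectation (\<lambda>x. X x * indicator {y. \<bar>X y\<bar> \<le> real N} x))\<^sup>2
      \<le> \<eta> * real N * (1 + expectation (\<lambda>x. (X x)\<^sup>2 * indicator {y. \<bar>X y\<bar> \<le> real N} x) / real N)"
proof -
  have "\<forall>\<^sub>F n in sequentially. prob {x \<in> space M. real n < \<bar>X x\<bar>} < \<eta> / 2"
    using order_tendstoD(2)[OF measure_abs_gt_tendsto_0[OF X], of "\<eta> / 2"] \<open>\<eta> > 0\<close>
    by (simp only: half_gt_zero)
  then obtain K :: nat where "prob {x \<in> space M. real K < \<bar>X x\<bar>} < \<eta> / 2"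
    by (auto simp: eventually_sequentially)
  then have K: "2 * prob {x \<in> space M. real K < \<bar>X x\<bar>} \<le> \<eta>"
    by simp
  show ?thesis
  proof (rule eventually_sequentiallyI[of "nat \<lceil>2 * (real K)\<^sup>2 / \<eta>\<rceil> + 1"])
    fix N :: nat
    assume "nat \<lceil>2 * (real K)\<^sup>2 / \<eta>\<rceil> + 1 \<le> N"
    then have "2 * (real K)\<^sup>2 / \<eta> \<le> real N" and "1 \<le> real N"
      by linarith+
    then have KN: "2 * (real K)\<^sup>2 \<le> \<eta> * real N"
      using \<open>\<eta> > 0\<close> by (simp add: field_simps)
    define s where "s = expectation (\<lambda>x. (X x)\<^sup>2 * indicator {y. \<bar>X y\<bar> \<le> real N} x)"
    have "(expectation (\<lambda>x. X x * indicator {y. \<bar>X y\<bar> \<le> real N} x))\<^sup>2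
        \<le> 2 * (real K)\<^sup>2 + 2 * prob {x \<in> space M. real K < \<bar>X x\<bar>} * s"
      unfolding s_def by (rule truncated_expectation_power2_le[OF X]) simp
    also have "\<dots> \<le> 2 * (real K)\<^sup>2 + \<eta> * s"
      using K by (intro add_left_mono mult_right_mono) (simp_all add: s_def)
    also have "\<dots> \<le> \<eta> * real N * (1 + s / real N)"
      using KN \<open>1 \<le> real N\<close> by (simp add: field_simps)
    finally show "(expectation (\<lambda>x. X x * indicator {y. \<bar>X y\<bar> \<le> real N} x))\<^sup>2
        \<le> \<eta> * real N * (1 + s / real N)" .
  qed
qed

theorem lemma7p1:
  fixes M :: "'a measure" and h :: "nat \<Rightarrow> 'a \<Rightarrow> real" and \<eta> :: real
  assumes "prob_space M"
    and "\<And>i. i \<ge> 1 \<Longrightarrow> h i \<in> borel_measurable M"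
    and "prob_space.indep_vars M (\<lambda>_. borel) h {1..}"
    and "\<And>i. i \<ge> 1 \<Longrightarrow> distr M borel (h i) = distr M borel (h 1)"
    and "\<eta> > 0"
  shows "\<exists>N\<^sub>\<eta>::nat. \<forall>N::nat. N \<ge> N\<^sub>\<eta> \<longrightarrow>
     (let \<delta> = prob_space.expectation M (\<lambda>x. h 1 x * indicator {y. \<bar>h 1 y\<bar> \<le> real N} x);
          \<sigma> = prob_space.expectation M (\<lambda>x. (h 1 x)\<^sup>2 * indicator {y. \<bar>h 1 y\<bar> \<le> real N} x) / real N
      in \<delta>\<^sup>2 \<le> \<eta> * real N * (1 + \<sigma>))"
proof -
  interpret prob_space M
    by (rule assms(1))
  have "h 1 \<in> borel_measurable M"
    using assms(2) by simp
  from eventually_truncated_expectation_power2_le[OF this assms(5)] show ?thesis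
    by (simp add: eventually_sequentially Let_def)
qed

end
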